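(* Let $d\ge1$ and let $\|\cdot\|$ be a norm on $\mathbb{R}^d$. Let $A\in\mathcal{B}(\mathbb{R}^d)$ and $a_1\in A$, with $A$ star-shaped relative to $a_1$ and $$\mathfrak{p}(A,\|\cdot-a_1\|):=\inf\Big\{\frac{\lambda_d(B(x,t)\cap A)}{\lambda_d(B(x,t))}:\ x\in A,\ 0<t\le\|x-a_1\|\Big\}>0.$$ Let $\nu=f\cdot\lambda_d$ be a probability measure on $\mathbb{R}^d$ where $f$ is almost radial non-increasing on $A$ with respect to $a_1$, with associated norm $\|\cdot\|_0$ and constant $M\in(0,1]$, and let $C_0\in[1,+\infty)$ satisfy $\frac1{C_0}\|x\|_0\le\|x\|\le C_0\|x\|_0$ for every $x\in\mathbb{R}^d$. Then for every $x\in A$ and every $t\in(0,\|x-a_1\|]$, $$\nu(B(x,t))\ge M\,\mathfrak{p}(A,\|\cdot-a_1\|)\,(2C_0^2)^{-d}\,V_d\,f(x)\,t^d.$$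
   Context: $B(x,t)=\{y:\|y-x\|\le t\}$, $\lambda_d$ Lebesgue measure, $V_d=\lambda_d(B(0,1))$. A function $f:\mathbb{R}^d\to\mathbb{R}_+$ is almost radial non-increasing on $A$ with respect to $a\in A$ if there exist a norm $\|\cdot\|_0$ on $\mathbb{R}^d$ and a constant $M\in(0,1]$ such that for all $x,y\in A\setminus\{a\}$ with $\|y-a\|_0\le\|x-a\|_0$, one has $f(y)\ge Mf(x)$. *)

theory Defs
  imports "HOL-Analysis.Analysis"
begin

definition is_norm :: "('a::real_vector \<Rightarrow> real) \<Rightarrow> bool" where
  "is_norm N \<longleftrightarrow>
     (\<forall>x. 0 \<le> N x) \<and> (\<forall>x. N x = 0 \<longleftrightarrow> x = 0) \<and>
     (\<forall>c x. N (c *\<^sub>R x) = \<bar>c\<bar> * N x) \<and> (\<forall>x y. N (x + y) \<le> N x + N y)"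

definition nball :: "('a::real_vector \<Rightarrow> real) \<Rightarrow> 'a \<Rightarrow> real \<Rightarrow> 'a set" where
  "nball N x t = {y. N (y - x) \<le> t}"

definition unit_ball_vol :: "('a::euclidean_space \<Rightarrow> real) \<Rightarrow> real" where
  "unit_ball_vol N = measure lborel (nball N 0 1)"

definition star_shaped_rel :: "'a::real_vector set \<Rightarrow> 'a \<Rightarrow> bool" where
  "star_shaped_rel A a \<longleftrightarrow> a \<in> A \<and> (\<forall>x\<in>A. closed_segment a x \<subseteq> A)"

definition frak_p :: "'a::euclidean_space set \<Rightarrow> ('a \<Rightarrow> real) \<Rightarrow> 'a \<Rightarrow> real" where
  "frak_p A N a = Inf {measure lborel (nball N x t \<inter> A) / measure lborel (nball N x t) | x t.
                         x \<in> A \<and> 0 < t \<and> t \<le> N (x - a)}"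

definition almost_radial_noninc ::
  "('a::real_vector \<Rightarrow> real) \<Rightarrow> 'a set \<Rightarrow> 'a \<Rightarrow> ('a \<Rightarrow> real) \<Rightarrow> real \<Rightarrow> bool" where
  "almost_radial_noninc f A a N0 M \<longleftrightarrow>
     is_norm N0 \<and> 0 < M \<and> M \<le> 1 \<and>
     (\<forall>x\<in>A - {a}. \<forall>y\<in>A - {a}. N0 (y - a) \<le> N0 (x - a) \<longrightarrow> f y \<ge> M * f x)"

end

theory Submission
  imports Defs
begin

text \<open>Walk from \<open>x\<close> towards \<open>a1\<close> by \<open>N\<close>-distance \<open>t/2\<close> to a point \<open>y\<close> of the segment, hence of \<open>A\<close>.
  The \<open>N\<close>-ball of radius \<open>s = t/(2 C0\<^sup>2)\<close> around \<open>y\<close> lies in \<open>B(x,t)\<close>, and each of its points is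
  \<open>N0\<close>-closer to \<open>a1\<close> than \<open>x\<close> (one factor \<open>C0\<close> converts its radius to \<open>N0\<close>, the other converts
  \<open>N(x - a1)\<close>), so \<open>f \<ge> M f(x)\<close> on it away from \<open>a1\<close>. As \<open>s \<le> N(y - a1)\<close>, at least the fraction
  \<open>p(A, N(. - a1))\<close> of its volume \<open>s^d V_d\<close> lies in \<open>A\<close>.\<close>

lemma convex_on_is_norm:
  assumes "is_norm N"
  shows "convex_on UNIV N"
proof
  fix u :: real and x y :: 'a
  assume "0 < u" "u < 1"
  then have "\<bar>1 - u\<bar> = 1 - u" "\<bar>u\<bar> = u" by auto
  with assms show "N ((1 - u) *\<^sub>R x + u *\<^sub>R y) \<le> (1 - u) * N x + u * N y"
    unfolding is_norm_def by metis
qed simp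

lemma continuous_on_is_norm:
  fixes N :: "'a::euclidean_space \<Rightarrow> real"
  assumes "is_norm N"
  shows "continuous_on UNIV N"
  using convex_on_continuous[OF open_UNIV convex_on_is_norm[OF assms]] .

lemma nball_in_borel:
  fixes N :: "'a::euclidean_space \<Rightarrow> real"
  assumes "is_norm N"
  shows "nball N x t \<in> sets borel"
proof -
  have "continuous_on UNIV (\<lambda>y. N (y - x))"
    by (intro continuous_on_compose2[OF continuous_on_is_norm[OF assms]] continuous_intros) auto
  then have "closed (nball N x t)"
    unfolding nball_def by (intro closed_Collect_le) auto
  then show ?thesis by simp
qed

lemma nball_eq_affine_image:
  assumes "is_norm N" "0 < s"
  shows "nball N y s = (\<lambda>w. s *\<^sub>R w + y) ` nball N 0 1"
proof (intro set_eqI iffI)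
  fix z assume "z \<in> nball N y s"
  then have "N ((1 / s) *\<^sub>R (z - y)) \<le> 1"
    using assms unfolding is_norm_def nball_def by (simp add: divide_le_eq)
  moreover have "z = s *\<^sub>R ((1 / s) *\<^sub>R (z - y)) + y" using assms(2) by simp
  ultimately show "z \<in> (\<lambda>w. s *\<^sub>R w + y) ` nball N 0 1" unfolding nball_def by force
next
  fix z assume "z \<in> (\<lambda>w. s *\<^sub>R w + y) ` nball N 0 1"
  then obtain w where "N w \<le> 1" "z = s *\<^sub>R w + y" unfolding nball_def by auto
  then show "z \<in> nball N y s"
    using assms unfolding is_norm_def nball_def by (simp add: mult_left_le)
qed

lemma measure_nball:
  fixes N :: "'a::euclidean_space \<Rightarrow> real"
  assumes "is_norm N" "0 < s"
  shows "measure lborel (nball N y s) = s ^ DIM('a) * unit_ball_vol N"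
proof -
  have "measure lebesgue (nball N y s) = \<bar>s\<bar> ^ DIM('a) * measure lebesgue (nball N 0 1)"
    unfolding nball_eq_affine_image[OF assms] by (rule measure_lebesgue_affine)
  then show ?thesis
    using assms nball_in_borel[OF assms(1)] unfolding unit_ball_vol_def by simp
qed

lemma nball_subset_nball:
  assumes "is_norm N" "N (y - x) + s \<le> t"
  shows "nball N y s \<subseteq> nball N x t"
proof
  fix z assume "z \<in> nball N y s"
  moreover have "N ((z - y) + (y - x)) \<le> N (z - y) + N (y - x)"
    using assms(1) unfolding is_norm_def by blast
  ultimately show "z \<in> nball N x t" using assms(2) unfolding nball_def by simp
qed

lemma frak_p_le_density_ratio:
  assumes "x \<in> A" "0 < t" "t \<le> N (x - a)"
  shows "frak_p A N a \<le> measure lborel (nball N x t \<inter> A) / measure lborel (nball N x t)"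
  unfolding frak_p_def using assms by (intro cInf_lower bdd_belowI[of _ 0]) auto

lemma measure_nball_inter_ge_frak_p:
  fixes N :: "'a::euclidean_space \<Rightarrow> real"
  assumes "is_norm N" "frak_p A N a > 0" "x \<in> A" "0 < t" "t \<le> N (x - a)"
  shows "frak_p A N a * t ^ DIM('a) * unit_ball_vol N \<le> measure lborel (nball N x t \<inter> A)"
proof -
  have ratio: "frak_p A N a \<le> measure lborel (nball N x t \<inter> A) / measure lborel (nball N x t)"
    by (rule frak_p_le_density_ratio) (use assms in auto)
  with assms(2) have "measure lborel (nball N x t) \<noteq> 0" by auto
  then have "measure lborel (nball N x t) > 0"
    using measure_nonneg[of lborel "nball N x t"] by linarith
  with ratio show ?thesis
    using measure_nball[OF assms(1,4)] by (simp add: le_divide_eq mult.assoc)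
qed

lemma is_norm_le_near_segment:
  assumes "is_norm N" "0 \<le> l" "l \<le> 1"
    and "N (z - (a + (1 - l) *\<^sub>R (x - a))) \<le> l * N (x - a)"
  shows "N (z - a) \<le> N (x - a)"
proof -
  let ?y = "a + (1 - l) *\<^sub>R (x - a)"
  have "N (z - a) \<le> N (z - ?y) + N ((1 - l) *\<^sub>R (x - a))"
  proof -
    have "z - a = (z - ?y) + (1 - l) *\<^sub>R (x - a)" by (simp add: algebra_simps)
    then show ?thesis using assms(1) unfolding is_norm_def by metis
  qed
  also have "\<dots> \<le> l * N (x - a) + (1 - l) * N (x - a)"
    using assms unfolding is_norm_def by simp
  finally show ?thesis by (simp add: algebra_simps)
qed

lemma obtain_inner_nball:
  fixes N N0 :: "'a::euclidean_space \<Rightarrow> real"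
  assumes "is_norm N" "is_norm N0" "C0 \<ge> 1"
    and N0_le: "\<And>v. N0 v \<le> C0 * N v" and N_le: "\<And>v. N v \<le> C0 * N0 v"
    and "star_shaped_rel A a" "x \<in> A" "0 < t" "t \<le> N (x - a)"
  obtains y where "y \<in> A" "t / (2 * C0\<^sup>2) \<le> N (y - a)"
    and "nball N y (t / (2 * C0\<^sup>2)) \<subseteq> nball N x t"
    and "\<And>z. z \<in> nball N y (t / (2 * C0\<^sup>2)) \<Longrightarrow> N0 (z - a) \<le> N0 (x - a)"
proof
  define s where "s = t / (2 * C0\<^sup>2)"
  define l where "l = t / (2 * N (x - a))"
  define y where "y = a + (1 - l) *\<^sub>R (x - a)"
  have hom: "\<And>c v. N (c *\<^sub>R v) = \<bar>c\<bar> * N v" using assms(1) unfolding is_norm_def by blast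
  have C0_sq: "1 \<le> C0\<^sup>2" using assms(3) by (simp add: one_le_power)
  have "s \<le> t / 2"
    unfolding s_def using C0_sq assms(8) by (intro divide_left_mono) auto
  moreover have "0 < s" unfolding s_def using C0_sq assms(8) by (intro divide_pos_pos) auto
  ultimately have s: "0 < s" "s \<le> t / 2" by auto
  have l: "0 < l" "l \<le> 1 / 2" "l * N (x - a) = t / 2"
    unfolding l_def using assms(8,9) by auto
  show "y \<in> A"
  proof -
    have "y \<in> closed_segment a x"
      unfolding closed_segment_def y_def using l
      by (intro CollectI exI[of _ "1 - l"]) (auto simp: algebra_simps)
    then show ?thesis using assms(6,7) unfolding star_shaped_rel_def by blast
  qed
  have "N (y - a) = (1 - l) * N (x - a)" unfolding y_def using hom l by simp
  also have "\<dots> \<ge> t / 2" using l(3) assms(9) by (simp add: left_diff_distrib)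
  finally show "s \<le> N (y - a)" using s by linarith
  have "N (y - x) = l * N (x - a)"
    using hom[of "- l" "x - a"] l by (simp add: y_def algebra_simps)
  then show "nball N y s \<subseteq> nball N x t"
    using s l by (intro nball_subset_nball[OF assms(1)]) auto
  have N_div_le: "N (x - a) / C0 \<le> N0 (x - a)"
    using N_le[of "x - a"] assms(3) by (simp add: divide_le_eq mult.commute)
  fix z assume "z \<in> nball N y s"
  then have "C0 * N (z - y) \<le> C0 * s"
    using assms(3) unfolding nball_def by (intro mult_left_mono) auto
  then have "N0 (z - y) \<le> C0 * s" using N0_le[of "z - y"] by linarith
  also have "C0 * s = l * (N (x - a) / C0)"
    using assms(3) unfolding s_def by (simp add: l(3) power2_eq_square)
  also have "\<dots> \<le> l * N0 (x - a)"
    using N_div_le l by (intro mult_left_mono) auto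
  finally show "N0 (z - a) \<le> N0 (x - a)"
    using l unfolding y_def by (intro is_norm_le_near_segment[OF assms(2)]) auto
qed

lemma measure_density_ge:
  fixes f :: "'a \<Rightarrow> real"
  assumes [measurable]: "f \<in> borel_measurable M"
    and "S \<in> sets M" "T \<in> sets M" "S \<subseteq> T" "0 \<le> c"
    and "AE z in M. z \<in> S \<longrightarrow> c \<le> f z"
    and "emeasure (density M (\<lambda>z. ennreal (f z))) T \<noteq> \<infinity>"
  shows "c * measure M S \<le> measure (density M (\<lambda>z. ennreal (f z))) T"
proof (cases "emeasure M S = \<infinity>")
  case True
  then show ?thesis by (simp add: measure_def)
next
  case False
  let ?\<nu> = "density M (\<lambda>z. ennreal (f z))"
  have "ennreal (c * measure M S) = ennreal c * emeasure M S"
    using False assms(5) by (simp add: emeasure_eq_ennreal_measure ennreal_mult)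
  also have "\<dots> = (\<integral>\<^sup>+z. ennreal c * indicator S z \<partial>M)"
    using assms(2) by (simp add: nn_integral_cmult_indicator)
  also have "\<dots> \<le> (\<integral>\<^sup>+z. ennreal (f z) * indicator S z \<partial>M)"
    using assms(6) by (intro nn_integral_mono_AE)
      (auto split: split_indicator elim!: eventually_mono intro: ennreal_leI)
  also have "\<dots> = emeasure ?\<nu> S"
    using assms(2) by (simp add: emeasure_density)
  also have "\<dots> \<le> emeasure ?\<nu> T"
    using assms(2-4) by (intro emeasure_mono) auto
  also have "\<dots> = ennreal (measure ?\<nu> T)"
    using assms(7) by (simp add: emeasure_eq_ennreal_measure)
  finally show ?thesis by simp
qed

lemma measure_density_ge_frak_p:
  fixes N :: "'a::euclidean_space \<Rightarrow> real" and f :: "'a \<Rightarrow> real"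
  assumes "is_norm N" "A \<in> sets borel" "frak_p A N a > 0" "f \<in> borel_measurable borel"
    and "y \<in> A" "0 < s" "s \<le> N (y - a)" "nball N y s \<subseteq> T" "T \<in> sets borel"
    and "0 \<le> c" "AE z in lborel. z \<in> nball N y s \<inter> A \<longrightarrow> c \<le> f z"
    and "emeasure (density lborel (\<lambda>z. ennreal (f z))) T \<noteq> \<infinity>"
  shows "c * (frak_p A N a * s ^ DIM('a) * unit_ball_vol N)
    \<le> measure (density lborel (\<lambda>z. ennreal (f z))) T"
proof -
  have "frak_p A N a * s ^ DIM('a) * unit_ball_vol N \<le> measure lborel (nball N y s \<inter> A)"
    using assms(3,5-7) by (intro measure_nball_inter_ge_frak_p[OF assms(1)]) auto
  then have "c * (frak_p A N a * s ^ DIM('a) * unit_ball_vol N)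
      \<le> c * measure lborel (nball N y s \<inter> A)"
    using assms(10) by (intro mult_left_mono)
  also have "\<dots> \<le> measure (density lborel (\<lambda>z. ennreal (f z))) T"
    using assms(2,4,8-12) nball_in_borel[OF assms(1)] by (intro measure_density_ge) auto
  finally show ?thesis .
qed

theorem lemma2p10:
  fixes N N0 :: "'a::euclidean_space \<Rightarrow> real"
    and A :: "'a set" and a1 :: 'a
    and f :: "'a \<Rightarrow> real" and M C0 :: real
  assumes "is_norm N"
    and "A \<in> sets borel" and "a1 \<in> A"
    and "star_shaped_rel A a1"
    and "frak_p A N a1 > 0"
    and "\<And>x. 0 \<le> f x" and "f \<in> borel_measurable borel"
    and "emeasure (density lborel (\<lambda>x. ennreal (f x))) UNIV = 1"
    and "almost_radial_noninc f A a1 N0 M"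
    and "C0 \<ge> 1"
    and "\<And>x. N0 x / C0 \<le> N x \<and> N x \<le> C0 * N0 x"
  shows "\<forall>x\<in>A. \<forall>t. 0 < t \<and> t \<le> N (x - a1) \<longrightarrow>
           measure (density lborel (\<lambda>x. ennreal (f x))) (nball N x t)
             \<ge> M * frak_p A N a1 * (2 * C0\<^sup>2) powr (- real DIM('a))
                 * unit_ball_vol N * f x * t ^ DIM('a)"
proof (intro ballI allI impI, elim conjE)
  fix x t assume x: "x \<in> A" and t: "0 < t" "t \<le> N (x - a1)"
  let ?\<nu> = "density lborel (\<lambda>x. ennreal (f x))"
  define s where "s = t / (2 * C0\<^sup>2)"
  have "N 0 = 0" using assms(1) unfolding is_norm_def by blast
  with t have "x \<noteq> a1" by auto
  then have N0: "is_norm N0" and M: "0 < M"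
    and radial: "\<And>z. z \<in> A - {a1} \<Longrightarrow> N0 (z - a1) \<le> N0 (x - a1) \<Longrightarrow> M * f x \<le> f z"
    using assms(9) x unfolding almost_radial_noninc_def by auto
  have "N0 v \<le> C0 * N v" for v
    using assms(10) assms(11)[of v] by (simp add: divide_le_eq mult.commute)
  then obtain y where y: "y \<in> A" "s \<le> N (y - a1)" "nball N y s \<subseteq> nball N x t"
    and closer: "\<And>z. z \<in> nball N y s \<Longrightarrow> N0 (z - a1) \<le> N0 (x - a1)"
    using obtain_inner_nball[OF assms(1) N0 assms(10) _ _ assms(4) x t] assms(11)
    unfolding s_def by metis
  have "AE z in lborel. z \<in> nball N y s \<inter> A \<longrightarrow> M * f x \<le> f z"
    using AE_lborel_singleton[of a1] by eventually_elim (use radial closer in blast)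
  moreover have "emeasure ?\<nu> (nball N x t) \<noteq> \<infinity>"
    using emeasure_mono[of "nball N x t" UNIV ?\<nu>] assms(8) by (auto simp: top_unique)
  ultimately have bound:
      "M * f x * (frak_p A N a1 * s ^ DIM('a) * unit_ball_vol N) \<le> measure ?\<nu> (nball N x t)"
    using assms(1,2,5-7) M y t nball_in_borel[OF assms(1)] assms(10)
    by (intro measure_density_ge_frak_p) (auto simp: s_def)
  have "(2 * C0\<^sup>2) powr (- real DIM('a)) = inverse ((2 * C0\<^sup>2) ^ DIM('a))"
    using assms(10) by (simp add: powr_minus powr_realpow)
  then have s_pow: "s ^ DIM('a) = (2 * C0\<^sup>2) powr (- real DIM('a)) * t ^ DIM('a)"
    unfolding s_def power_divide by (simp add: divide_inverse mult.commute)
  show "M * frak_p A N a1 * (2 * C0\<^sup>2) powr (- real DIM('a)) * unit_ball_vol N * f x * t ^ DIM('a)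
        \<le> measure ?\<nu> (nball N x t)"
    using bound unfolding s_pow by (simp only: ac_simps)
qed

end
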